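(* For every graph $G$ and every integer $k\ge 0$, $\pi^*(G+K_k)=\pi^*(G)+k$.
   Context: All graphs are finite and simple. $A+B$ denotes the complete join of graphs $A$ and $B$: the disjoint union of $A$ and $B$ together with all edges between $V(A)$ and $V(B)$; $K_k$ is the complete graph on $k$ vertices. A lazy walk in a graph $G$ is a sequence of vertices $v_1,\dots,v_m$ such that for each $i<m$, either $v_iv_{i+1}\in E(G)$ or $v_i=v_{i+1}$. For a colouring $\phi$ of $V(G)$, a lazy walk $v_1,\dots,v_{2t}$ is $\phi$-repetitive if $\phi(v_i)=\phi(v_{i+t})$ for each $i\in\{1,\dots,t\}$. A colouring $\phi$ is strongly nonrepetitive if for every $\phi$-repetitive lazy walk $v_1,\dots,v_{2t}$ there exists $i\in\{1,\dots,t\}$ with $v_i=v_{i+t}$. $\pi^*(G)$ denotes the minimum number of colours in a strongly nonrepetitive colouring of $G$. *)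

theory Defs
  imports Main
begin

definition simple_graph :: "'a set \<Rightarrow> ('a \<Rightarrow> 'a \<Rightarrow> bool) \<Rightarrow> bool" where
  "simple_graph V E \<longleftrightarrow> finite V \<and> (\<forall>x y. E x y \<longrightarrow> E y x) \<and> (\<forall>x. \<not> E x x)
     \<and> (\<forall>x y. E x y \<longrightarrow> x \<in> V \<and> y \<in> V)"

text \<open>Lazy walk v_1..v_m (m >= 1), as a nonempty list, 0-indexed.\<close>
definition lazy_walk :: "'a set \<Rightarrow> ('a \<Rightarrow> 'a \<Rightarrow> bool) \<Rightarrow> 'a list \<Rightarrow> bool" where
  "lazy_walk V E ws \<longleftrightarrow> ws \<noteq> [] \<and> set ws \<subseteq> V \<and>
     (\<forall>i. Suc i < length ws \<longrightarrow> E (ws ! i) (ws ! Suc i) \<or> ws ! i = ws ! Suc i)"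

definition repetitive :: "('a \<Rightarrow> 'c) \<Rightarrow> 'a list \<Rightarrow> bool" where
  "repetitive \<phi> ws \<longleftrightarrow> (\<exists>t. t > 0 \<and> length ws = 2 * t \<and>
     (\<forall>i<t. \<phi> (ws ! i) = \<phi> (ws ! (i + t))))"

definition strongly_nonrepetitive :: "'a set \<Rightarrow> ('a \<Rightarrow> 'a \<Rightarrow> bool) \<Rightarrow> ('a \<Rightarrow> 'c) \<Rightarrow> bool" where
  "strongly_nonrepetitive V E \<phi> \<longleftrightarrow>
     (\<forall>ws. lazy_walk V E ws \<and> repetitive \<phi> ws \<longrightarrow>
        (\<exists>i < length ws div 2. ws ! i = ws ! (i + length ws div 2)))"

definition pi_star :: "'a set \<Rightarrow> ('a \<Rightarrow> 'a \<Rightarrow> bool) \<Rightarrow> nat" where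
  "pi_star V E = (LEAST n. \<exists>\<phi> :: 'a \<Rightarrow> nat. strongly_nonrepetitive V E \<phi> \<and> card (\<phi> ` V) = n)"

text \<open>Complete join G + K_k: vertices Inl v (v in V) and Inr i (i < k).\<close>
definition join_V :: "'a set \<Rightarrow> nat \<Rightarrow> ('a + nat) set" where
  "join_V V k = Inl ` V \<union> Inr ` {..<k}"

fun join_E :: "'a set \<Rightarrow> ('a \<Rightarrow> 'a \<Rightarrow> bool) \<Rightarrow> nat \<Rightarrow> ('a + nat) \<Rightarrow> ('a + nat) \<Rightarrow> bool" where
  "join_E V E k (Inl a) (Inl b) = E a b"
| "join_E V E k (Inr i) (Inr j) = (i < k \<and> j < k \<and> i \<noteq> j)"
| "join_E V E k (Inl a) (Inr j) = (a \<in> V \<and> j < k)"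
| "join_E V E k (Inr i) (Inl b) = (i < k \<and> b \<in> V)"

end

theory Submission
  imports Defs
begin

text \<open>Upper bound: keep an optimal colouring of G, shifted by k, and give the k apex
  vertices the fresh colours 0, ..., k-1. In a repetitive lazy walk that visits an apex, the
  position t steps away carries the same unique colour, hence the same vertex; a walk avoiding
  the apices is a lazy walk in G. Lower bound: an apex is adjacent to every other vertex, so the
  walk of length two through it forces its colour to be unique, and the colouring restricted
  to G is still strongly nonrepetitive.\<close>

lemma strongly_nonrepetitive_inj_on:
  assumes "inj_on \<phi> W"
  shows "strongly_nonrepetitive W F \<phi>"
  unfolding strongly_nonrepetitive_def
proof (intro allI impI)
  fix ws assume walk: "lazy_walk W F ws \<and> repetitive \<phi> ws"
  then obtain t where t: "t > 0" "length ws = 2 * t" "\<phi> (ws ! 0) = \<phi> (ws ! (0 + t))"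
    unfolding repetitive_def by blast
  have "ws ! 0 \<in> W" "ws ! (0 + t) \<in> W"
    using walk t nth_mem[of 0 ws] nth_mem[of "0 + t" ws] unfolding lazy_walk_def by auto
  with assms t have "ws ! 0 = ws ! (0 + t)" by (meson inj_onD)
  with t show "\<exists>i<length ws div 2. ws ! i = ws ! (i + length ws div 2)" by auto
qed

lemma pi_star_le:
  assumes "strongly_nonrepetitive W F (\<phi> :: 'b \<Rightarrow> nat)"
  shows "pi_star W F \<le> card (\<phi> ` W)"
  unfolding pi_star_def using assms by (intro Least_le) blast

lemma pi_star_attained:
  assumes "finite W"
  obtains \<phi> :: "'b \<Rightarrow> nat"
  where "strongly_nonrepetitive W F \<phi>" "card (\<phi> ` W) = pi_star W F"
proof -
  obtain f :: "'b \<Rightarrow> nat" and n where "inj_on f W"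
    using finite_imp_inj_to_nat_seg[OF assms] by blast
  then have "\<exists>n \<phi> :: 'b \<Rightarrow> nat. strongly_nonrepetitive W F \<phi> \<and> card (\<phi> ` W) = n"
    using strongly_nonrepetitive_inj_on by blast
  from LeastI_ex[OF this] show ?thesis using that unfolding pi_star_def by blast
qed

lemma strongly_nonrepetitive_adjacent_colours_distinct:
  assumes "strongly_nonrepetitive W F \<psi>" "x \<in> W" "y \<in> W" "F x y" "x \<noteq> y"
  shows "\<psi> x \<noteq> \<psi> y"
proof
  assume "\<psi> x = \<psi> y"
  then have "repetitive \<psi> [x, y]" unfolding repetitive_def by (intro exI[of _ 1]) auto
  moreover have "lazy_walk W F [x, y]"
    unfolding lazy_walk_def using assms by (auto simp: less_Suc_eq)
  ultimately show False
    using assms(1,5) unfolding strongly_nonrepetitive_def by fastforce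
qed

lemma repetitive_repeats_at_unique_colour:
  assumes "repetitive \<psi> ws" "x \<in> set ws" "\<forall>y \<in> set ws. \<psi> y = \<psi> x \<longrightarrow> y = x"
  shows "\<exists>i<length ws div 2. ws ! i = ws ! (i + length ws div 2)"
proof -
  obtain t where t: "length ws = 2 * t" "\<forall>i<t. \<psi> (ws ! i) = \<psi> (ws ! (i + t))"
    using assms(1) unfolding repetitive_def by blast
  obtain j where j: "j < 2 * t" "ws ! j = x" using assms(2) t(1) by (auto simp: in_set_conv_nth)
  have "\<exists>i<t. i = j \<or> i + t = j" using j(1) by presburger
  then obtain i where i: "i < t" "i = j \<or> i + t = j" by blast
  have "ws ! i \<in> set ws" "ws ! (i + t) \<in> set ws" using i(1) t(1) by auto
  with assms(3) t(2) i j(2) have "ws ! i = ws ! (i + t)" by metis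
  with i(1) t(1) show ?thesis by auto
qed

lemma lazy_walk_join_map_Inl_iff:
  "lazy_walk (join_V V k) (join_E V E k) (map Inl vs) \<longleftrightarrow> lazy_walk V E vs"
  unfolding lazy_walk_def join_V_def by auto

lemma strongly_nonrepetitive_join_Inl:
  assumes "strongly_nonrepetitive (join_V V k) (join_E V E k) \<chi>"
  shows "strongly_nonrepetitive V E (\<chi> \<circ> Inl)"
  unfolding strongly_nonrepetitive_def
proof (intro allI impI)
  fix vs assume "lazy_walk V E vs \<and> repetitive (\<chi> \<circ> Inl) vs"
  then have "lazy_walk (join_V V k) (join_E V E k) (map Inl vs) \<and> repetitive \<chi> (map Inl vs)"
    unfolding lazy_walk_join_map_Inl_iff repetitive_def by auto
  then show "\<exists>i<length vs div 2. vs ! i = vs ! (i + length vs div 2)"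
    using assms unfolding strongly_nonrepetitive_def by fastforce
qed

lemma strongly_nonrepetitive_join_shifted:
  assumes "strongly_nonrepetitive V E \<phi>"
  shows "strongly_nonrepetitive (join_V V k) (join_E V E k) (case_sum (\<lambda>a. \<phi> a + k) id)"
    (is "strongly_nonrepetitive _ _ ?\<psi>")
  unfolding strongly_nonrepetitive_def
proof (intro allI impI)
  fix ws assume walk: "lazy_walk (join_V V k) (join_E V E k) ws \<and> repetitive ?\<psi> ws"
  show "\<exists>i<length ws div 2. ws ! i = ws ! (i + length ws div 2)"
  proof (cases "\<exists>r. Inr r \<in> set ws")
    case True
    then obtain r where r: "Inr r \<in> set ws" by blast
    moreover have "set ws \<subseteq> join_V V k" using walk unfolding lazy_walk_def by blast
    ultimately have "r < k" unfolding join_V_def by auto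
    then have "\<forall>y \<in> set ws. ?\<psi> y = ?\<psi> (Inr r) \<longrightarrow> y = Inr r"
      by (simp split: sum.split)
    with walk r show ?thesis by (blast intro: repetitive_repeats_at_unique_colour)
  next
    case False
    have "map (Inl \<circ> projl) ws = ws"
    proof (rule map_idI)
      fix y assume "y \<in> set ws"
      with False show "(Inl \<circ> projl) y = y" by (cases y) auto
    qed
    then obtain vs where ws: "ws = map Inl vs" by (metis map_map)
    have "lazy_walk V E vs"
      using walk unfolding ws lazy_walk_join_map_Inl_iff by blast
    moreover have "repetitive \<phi> vs"
      using walk unfolding ws repetitive_def by auto
    ultimately obtain i where "i < length vs div 2" "vs ! i = vs ! (i + length vs div 2)"
      using assms unfolding strongly_nonrepetitive_def by blast
    then show ?thesis unfolding ws by auto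
  qed
qed

lemma pi_star_join_le:
  assumes "finite V"
  shows "pi_star (join_V V k) (join_E V E k) \<le> pi_star V E + k"
proof -
  obtain \<phi> :: "'a \<Rightarrow> nat" where \<phi>: "strongly_nonrepetitive V E \<phi>" "card (\<phi> ` V) = pi_star V E"
    using pi_star_attained[OF assms] by blast
  let ?\<psi> = "case_sum (\<lambda>a. \<phi> a + k) id"
  have "?\<psi> ` join_V V k = (\<lambda>c. c + k) ` \<phi> ` V \<union> {..<k}"
    unfolding join_V_def image_Un image_image by simp
  also have "card \<dots> = card ((\<lambda>c. c + k) ` \<phi> ` V) + card {..<k}"
    using assms by (intro card_Un_disjoint) auto
  also have "\<dots> = pi_star V E + k"
    using \<phi>(2) by (simp add: card_image)
  finally have "card (?\<psi> ` join_V V k) = pi_star V E + k" .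
  then show ?thesis
    using pi_star_le[OF strongly_nonrepetitive_join_shifted[OF \<phi>(1), where k = k]] by simp
qed

lemma pi_star_join_ge:
  assumes "finite V"
  shows "pi_star V E + k \<le> pi_star (join_V V k) (join_E V E k)"
proof -
  obtain \<chi> :: "'a + nat \<Rightarrow> nat" where \<chi>: "strongly_nonrepetitive (join_V V k) (join_E V E k) \<chi>"
    "card (\<chi> ` join_V V k) = pi_star (join_V V k) (join_E V E k)"
    using pi_star_attained[of "join_V V k"] assms unfolding join_V_def by blast
  have apex_colour_unique: "\<chi> (Inr i) \<noteq> \<chi> x" if "i < k" "x \<in> join_V V k" "x \<noteq> Inr i" for i x
    using strongly_nonrepetitive_adjacent_colours_distinct[OF \<chi>(1), of "Inr i" x] that
    unfolding join_V_def by (cases x) auto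
  have "\<chi> ` join_V V k = (\<chi> \<circ> Inl) ` V \<union> \<chi> ` Inr ` {..<k}"
    unfolding join_V_def by auto
  moreover have "(\<chi> \<circ> Inl) ` V \<inter> \<chi> ` Inr ` {..<k} = {}"
    using apex_colour_unique unfolding join_V_def by fastforce
  moreover have "inj_on \<chi> (Inr ` {..<k})"
    using apex_colour_unique unfolding join_V_def by (intro inj_onI) fastforce
  then have "card (\<chi> ` Inr ` {..<k}) = k"
    by (simp add: card_image inj_on_def)
  ultimately have "card (\<chi> ` join_V V k) = card ((\<chi> \<circ> Inl) ` V) + k"
    using assms by (simp add: card_Un_disjoint)
  then show ?thesis
    using pi_star_le[OF strongly_nonrepetitive_join_Inl[OF \<chi>(1)]] \<chi>(2) by simp
qed

theorem mainTheorem9: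
  fixes V :: "'a set" and E :: "'a \<Rightarrow> 'a \<Rightarrow> bool" and k :: nat
  assumes "simple_graph V E"
  shows "pi_star (join_V V k) (join_E V E k) = pi_star V E + k"
proof -
  have "finite V" using assms unfolding simple_graph_def by blast
  then show ?thesis using pi_star_join_le pi_star_join_ge by (metis le_antisym)
qed

end
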